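(* Let $p=p_1\dots p_r$ and $p'=p'_1\dots p'_r$ be consecutive patterns with $p_1=p'_1$, $p_r=p'_r$ and $\max_i p_i=\max_i p'_i$. Then $p$ is changeable for $p'$ if and only if for every $n$, every $e\in\mathbf{I}_n$, and every occurrence of $p$ in $e$, the change of that occurrence of $p$ into an occurrence of $p'$ is valid.
   Context: An inversion sequence of length $n$ is an integer sequence $e=e_1e_2\dots e_n$ with $0\le e_i<i$ for all $i$; $\mathbf{I}_n$ denotes the set of these. A pattern of length $r$ is a sequence $p=p_1\dots p_r$ with $p_i\in\{0,\dots,r-1\}$ such that whenever a value $j>0$ appears in $p$, the value $j-1$ also appears. The reduction of an integer word $w$ is obtained by replacing every occurrence of the $i$-th smallest distinct value of $w$ by $i-1$. An inversion sequence $e$ has an occurrence of the consecutive pattern $p$ in position $i$ if the reduction of $e_i\dots e_{i+r-1}$ equals $p$. Change: let $d=\max_i p_i=\max_i p'_i$; if $e\in\mathbf{I}_n$ has an occurrence of $p$ in position $i$, let $f:\{0,\dots,d\}\to\{e_i,\dots,e_{i+r-1}\}$ be the order-preserving bijection with $e_{i+t-1}=f(p_t)$ for $1\le t\le r$; the change of this occurrence into an occurrence of $p'$ is the sequence $e'$ with $e'_{i+t-1}=f(p'_t)$ for $1\le t\le r$ and $e'_j=e_j$ for $j<i$ or $j>i+r-1$. The change is valid if $e'\in\mathbf{I}_n$. $p$ is changeable for $p'$ if for all $1\le i\le r$, $p'_i\le\max(\{p_j:1\le j\le i\}\cup\{p_j-j+i: i<j\le r\})$. *)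

theory Defs
  imports Main
begin

text \<open>Sequences are lists, indexed from 0: list entry e ! k corresponds to e_{k+1}.\<close>

definition inv_seq :: "nat \<Rightarrow> nat list \<Rightarrow> bool" where
  "inv_seq n e \<longleftrightarrow> length e = n \<and> (\<forall>k < n. e ! k < k + 1)"

definition is_pattern :: "nat list \<Rightarrow> bool" where
  "is_pattern p \<longleftrightarrow> (\<forall>x \<in> set p. x < length p) \<and>
     (\<forall>j \<in> set p. 0 < j \<longrightarrow> j - 1 \<in> set p)"

definition reduction :: "nat list \<Rightarrow> nat list" where
  "reduction w = map (\<lambda>x. card {y \<in> set w. y < x}) w"

definition occurs_at :: "nat list \<Rightarrow> nat list \<Rightarrow> nat \<Rightarrow> bool" where
  "occurs_at p e i \<longleftrightarrow> i + length p \<le> length e \<and>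
     reduction (take (length p) (drop i e)) = p"

text \<open>The change of the occurrence at position i of p into p'; f is the order-preserving
  bijection from {0..d} onto the set of values of the window.\<close>
definition change :: "nat list \<Rightarrow> nat list \<Rightarrow> nat list \<Rightarrow> nat \<Rightarrow> nat list" where
  "change p p' e i =
     (let w = take (length p) (drop i e);
          f = (\<lambda>k. sorted_list_of_set (set w) ! k)
      in take i e @ map f p' @ drop (i + length p) e)"

definition valid_change :: "nat list \<Rightarrow> nat list \<Rightarrow> nat list \<Rightarrow> nat \<Rightarrow> bool" where
  "valid_change p p' e i \<longleftrightarrow> inv_seq (length e) (change p p' e i)"

definition changeable :: "nat list \<Rightarrow> nat list \<Rightarrow> bool" where
  "changeable p p' \<longleftrightarrow> (\<forall>i < length p.
     int (p' ! i) \<le> Max ({int (p ! j) | j. j \<le> i} \<union>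
                        {int (p ! j) - int j + int i | j. i < j \<and> j < length p}))"

end

theory Submission
  imports Defs
begin

text \<open>
  Let the occurrence of \<open>p\<close> sit in positions \<open>i, \<dots>, i + r - 1\<close> with values
  \<open>f 0 < \<dots> < f d\<close>. Validity of the change only concerns the window, where the entry
  \<open>f (p'\<^sub>t)\<close> must not exceed \<open>i + t\<close>. Since \<open>f\<close> is strictly increasing,
  \<open>f v \<le> f (p\<^sub>j) - (p\<^sub>j - v) \<le> i + j - (p\<^sub>j - v)\<close> whenever \<open>v \<le> p\<^sub>j\<close>; the changeability
  condition says exactly that some \<open>j\<close> makes this bound at most \<open>i + t\<close>. Conversely the
  pointwise largest admissible \<open>f\<close>, namely \<open>f v = r + min {j + v - p\<^sub>j | v \<le> p\<^sub>j}\<close> placed at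
  position \<open>r\<close> after \<open>r\<close> zeros, attains all these bounds, so a failure of changeability
  at \<open>t\<close> produces an invalid change.
\<close>

lemma sorted_wrt_less_nth_gap:
  fixes L :: "nat list"
  assumes "sorted_wrt (<) L" and "a \<le> b" and "b < length L"
  shows "L ! a + (b - a) \<le> L ! b"
  using assms(2,3)
proof (induction b rule: dec_induct)
  case (step b)
  have "L ! b < L ! Suc b"
    using sorted_wrt_nth_less[OF assms(1)] step.prems by simp
  with step show ?case by (simp add: Suc_diff_le)
qed simp

lemma card_less_image_strict_mono_on:
  fixes f :: "'a::linorder \<Rightarrow> 'b::linorder"
  assumes "strict_mono_on A f" and "x \<in> A"
  shows "card {y \<in> f ` A. y < f x} = card {z \<in> A. z < x}"
proof -
  have "{y \<in> f ` A. y < f x} = f ` {z \<in> A. z < x}"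
    using strict_mono_on_less[OF assms(1) _ assms(2)] by auto
  moreover have "inj_on f {z \<in> A. z < x}"
    using strict_mono_on_imp_inj_on[OF assms(1)] by (rule inj_on_subset) auto
  ultimately show ?thesis by (simp add: card_image)
qed

lemma reduction_map_strict_mono_on:
  assumes "strict_mono_on (set w) f"
  shows "reduction (map f w) = reduction w"
  unfolding reduction_def using card_less_image_strict_mono_on[OF assms] by simp

lemma set_pattern:
  assumes "is_pattern p" and "p \<noteq> []"
  shows "set p = {..Max (set p)}"
proof -
  have "v \<in> set p" if "v \<le> Max (set p)" for v
    using that
  proof (induction "Max (set p) - v" arbitrary: v)
    case 0
    then have "v = Max (set p)" by simp
    then show ?case using assms(2) by simp
  next
    case (Suc x)
    then have "Suc v \<in> set p" by simp
    then show ?case using assms(1) unfolding is_pattern_def by fastforce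
  qed
  then show ?thesis using assms(2) by auto
qed

lemma reduction_pattern:
  assumes "is_pattern p"
  shows "reduction p = p"
proof (cases "p = []")
  case False
  obtain d where d: "set p = {..d}"
    using set_pattern[OF assms False] by blast
  have "card {y \<in> set p. y < x} = x" if "x \<in> set p" for x
  proof -
    have "{y \<in> set p. y < x} = {..<x}"
      using that unfolding d by auto
    then show ?thesis by simp
  qed
  then show ?thesis unfolding reduction_def by (rule map_idI)
qed (simp add: reduction_def)

lemma reduction_nth_sorted_list_of_set:
  fixes w :: "nat list"
  assumes "t < length w"
  defines "L \<equiv> sorted_list_of_set (set w)"
  shows "reduction w ! t < length L" and "L ! (reduction w ! t) = w ! t"
proof -
  have mono: "strict_mono_on {..<length L} (nth L)"
    using sorted_wrt_nth_less[OF strict_sorted_list_of_set]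
    by (auto simp: L_def intro: strict_mono_onI)
  have "set w = set L"
    by (simp add: L_def)
  also have "\<dots> = nth L ` {..<length L}"
    by (auto simp: in_set_conv_nth)
  finally have setL: "set w = nth L ` {..<length L}" .
  obtain k where k: "k < length L" "L ! k = w ! t"
    using assms(1) setL nth_mem by (metis imageE lessThan_iff)
  have "reduction w ! t = card {y \<in> set w. y < L ! k}"
    using assms(1) k(2) by (simp add: reduction_def)
  also have "\<dots> = card {z \<in> {..<length L}. z < k}"
    using card_less_image_strict_mono_on[OF mono, of k] k(1) setL by simp
  also have "\<dots> = k"
    using k(1) by (simp add: Collect_conj_eq lessThan_def[symmetric] Int_absorb1)
  finally show "reduction w ! t < length L" and "L ! (reduction w ! t) = w ! t"
    using k by simp_all
qed

text \<open>The subtraction \<open>j - t\<close> truncates, so for \<open>j \<le> t\<close> the condition is \<open>p'\<^sub>t \<le> p\<^sub>j\<close>.\<close>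

lemma changeable_iff:
  "changeable p p' \<longleftrightarrow> (\<forall>t < length p. \<exists>j < length p. p' ! t + (j - t) \<le> p ! j)"
proof -
  have "int (p' ! t) \<le> Max S \<longleftrightarrow> (\<exists>j < length p. p' ! t + (j - t) \<le> p ! j)"
    if "t < length p"
      and S: "S = {int (p ! j) | j. j \<le> t} \<union> {int (p ! j) - int j + int t | j. t < j \<and> j < length p}"
    for t S
  proof -
    have "finite S" "S \<noteq> {}"
      unfolding S by auto
    then have "int (p' ! t) \<le> Max S \<longleftrightarrow> (\<exists>s \<in> S. int (p' ! t) \<le> s)"
      by (rule Max_ge_iff)
    also have "\<dots> \<longleftrightarrow> (\<exists>j < length p. p' ! t + (j - t) \<le> p ! j)"
    proof
      assume "\<exists>s \<in> S. int (p' ! t) \<le> s"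
      then show "\<exists>j < length p. p' ! t + (j - t) \<le> p ! j"
        unfolding S using \<open>t < length p\<close> by (auto intro: le_less_trans)
    next
      assume "\<exists>j < length p. p' ! t + (j - t) \<le> p ! j"
      then obtain j where j: "j < length p" "p' ! t + (j - t) \<le> p ! j"
        by blast
      show "\<exists>s \<in> S. int (p' ! t) \<le> s"
      proof (cases "j \<le> t")
        case True
        then show ?thesis
          using j by (intro bexI[of _ "int (p ! j)"]) (auto simp: S)
      next
        case False
        then show ?thesis
          using j by (intro bexI[of _ "int (p ! j) - int j + int t"]) (auto simp: S)
      qed
    qed
    finally show ?thesis .
  qed
  then show ?thesis
    unfolding changeable_def by auto
qed

lemma length_change:
  assumes "occurs_at p e i" and "length p = length p'"
  shows "length (change p p' e i) = length e"
  using assms by (simp add: occurs_at_def change_def Let_def)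

lemma nth_change_window:
  assumes "occurs_at p e i" and "length p = length p'" and "t < length p"
  shows "change p p' e i ! (i + t) = sorted_list_of_set (set (take (length p) (drop i e))) ! (p' ! t)"
  using assms by (simp add: occurs_at_def change_def Let_def nth_append)

lemma nth_change_outside:
  assumes "occurs_at p e i" and "length p = length p'" and "k < length e"
    and "\<not> (i \<le> k \<and> k < i + length p)"
  shows "change p p' e i ! k = e ! k"
  using assms by (auto simp: occurs_at_def change_def Let_def nth_append)

lemma valid_change_iff:
  assumes "inv_seq n e" and occ: "occurs_at p e i" and len: "length p = length p'"
  shows "valid_change p p' e i \<longleftrightarrow>
    (\<forall>t < length p. sorted_list_of_set (set (take (length p) (drop i e))) ! (p' ! t) \<le> i + t)"
    (is "_ \<longleftrightarrow> (\<forall>t < length p. ?L ! (p' ! t) \<le> i + t)")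
proof -
  have e: "length e = n" "\<And>k. k < n \<Longrightarrow> e ! k \<le> k"
    using assms(1) by (auto simp: inv_seq_def less_Suc_eq_le)
  have window: "i + length p \<le> length e"
    using occ by (simp add: occurs_at_def)
  have "valid_change p p' e i \<longleftrightarrow> (\<forall>k < length e. change p p' e i ! k \<le> k)"
    by (simp add: valid_change_def inv_seq_def length_change[OF occ len] less_Suc_eq_le)
  also have "\<dots> \<longleftrightarrow> (\<forall>t < length p. change p p' e i ! (i + t) \<le> i + t)"
  proof
    assume "\<forall>t < length p. change p p' e i ! (i + t) \<le> i + t"
    moreover have "change p p' e i ! k \<le> k" if "k < length e" "\<not> (i \<le> k \<and> k < i + length p)" for k
      using nth_change_outside[OF occ len that] e that by simp
    ultimately show "\<forall>k < length e. change p p' e i ! k \<le> k"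
      by (metis le_add_diff_inverse nat_add_left_cancel_less)
  qed (use window in auto)
  also have "\<dots> \<longleftrightarrow> (\<forall>t < length p. ?L ! (p' ! t) \<le> i + t)"
    using nth_change_window[OF occ len] by simp
  finally show ?thesis .
qed

lemma changeable_imp_valid_change:
  assumes "changeable p p'" and len: "length p = length p'" and "Max (set p) = Max (set p')"
    and inv: "inv_seq n e" and occ: "occurs_at p e i"
  shows "valid_change p p' e i"
  unfolding valid_change_iff[OF inv occ len]
proof (intro allI impI)
  fix t assume t: "t < length p"
  define w where "w = take (length p) (drop i e)"
  define L where "L = sorted_list_of_set (set w)"
  have red: "reduction w = p" and lw: "length w = length p" and window: "i + length p \<le> length e"
    using occ by (auto simp: occurs_at_def w_def)
  have L_nth: "p ! j < length L" "L ! (p ! j) = e ! (i + j)" if "j < length p" for j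
    using reduction_nth_sorted_list_of_set[of j w] that red lw window
    by (simp_all add: L_def w_def)
  obtain j where j: "j < length p" "p' ! t + (j - t) \<le> p ! j"
    using assms(1) t by (auto simp: changeable_iff)
  obtain jmax where "jmax < length p" "p ! jmax = Max (set p)"
    using t Max_in[of "set p"] by (fastforce simp: in_set_conv_nth)
  then have "p' ! t < length L"
    using L_nth(1) t len assms(3) by (metis Max_ge finite_set nth_mem le_less_trans)
  then have "L ! (p' ! t) + (p ! j - p' ! t) \<le> L ! (p ! j)"
    using sorted_wrt_less_nth_gap[OF strict_sorted_list_of_set] j L_nth(1)[OF j(1)]
    by (simp add: L_def)
  moreover have "e ! (i + j) \<le> i + j"
    using inv j(1) window by (simp add: inv_seq_def less_Suc_eq_le)
  ultimately show "L ! (p' ! t) \<le> i + t"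
    using j L_nth(2)[OF j(1)] by linarith
qed

definition top_embedding :: "nat list \<Rightarrow> nat \<Rightarrow> nat" where
  "top_embedding p v = Min ((\<lambda>j. length p + j + v - p ! j) ` {j. j < length p \<and> v \<le> p ! j})"

lemma top_embedding_le:
  assumes "j < length p" and "v \<le> p ! j"
  shows "top_embedding p v \<le> length p + j + v - p ! j"
  unfolding top_embedding_def using assms by (intro Min_le) auto

lemma top_embedding_attained:
  assumes "p \<noteq> []" and "v \<le> Max (set p)"
  obtains j where "j < length p" "v \<le> p ! j" "top_embedding p v = length p + j + v - p ! j"
proof -
  obtain jmax where "jmax < length p" "p ! jmax = Max (set p)"
    using assms(1) Max_in[of "set p"] by (fastforce simp: in_set_conv_nth)
  then have "{j. j < length p \<and> v \<le> p ! j} \<noteq> {}"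
    using assms(2) by auto
  then have "top_embedding p v \<in> (\<lambda>j. length p + j + v - p ! j) ` {j. j < length p \<and> v \<le> p ! j}"
    unfolding top_embedding_def by (intro Min_in) auto
  then show ?thesis
    using that by blast
qed

lemma top_embedding_nth_le:
  assumes "j < length p"
  shows "top_embedding p (p ! j) \<le> length p + j"
  using top_embedding_le[OF assms order.refl] by simp

lemma strict_mono_on_top_embedding:
  assumes "is_pattern p" and "p \<noteq> []"
  shows "strict_mono_on {..Max (set p)} (top_embedding p)"
proof (rule strict_mono_onI)
  fix a b assume "a \<in> {..Max (set p)}" "b \<in> {..Max (set p)}" "a < b"
  moreover obtain j where "j < length p" "b \<le> p ! j" "top_embedding p b = length p + j + b - p ! j"
    using top_embedding_attained[OF assms(2)] \<open>b \<in> {..Max (set p)}\<close> by auto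
  moreover have "p ! j < length p"
    using assms(1) \<open>j < length p\<close> by (simp add: is_pattern_def)
  ultimately show "top_embedding p a < top_embedding p b"
    using top_embedding_le[of j p a] by simp
qed

lemma top_embedding_gt:
  assumes "is_pattern p" and "p \<noteq> []" and "v \<le> Max (set p)"
    and below: "\<forall>j < length p. p ! j < v + (j - t)"
  shows "length p + t < top_embedding p v"
proof -
  obtain j where j: "j < length p" "v \<le> p ! j" "top_embedding p v = length p + j + v - p ! j"
    using top_embedding_attained[OF assms(2,3)] by blast
  moreover have "p ! j < length p"
    using assms(1) j(1) by (simp add: is_pattern_def)
  ultimately show ?thesis
    using below by fastforce
qed

lemma inv_seq_top_embedding:
  "inv_seq (2 * length p) (replicate (length p) 0 @ map (top_embedding p) p)"
  unfolding inv_seq_def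
proof (intro conjI allI impI)
  fix k assume k: "k < 2 * length p"
  show "(replicate (length p) 0 @ map (top_embedding p) p) ! k < k + 1"
  proof (cases "k < length p")
    case False
    then have "k - length p < length p"
      using k by simp
    then show ?thesis
      using top_embedding_nth_le[of "k - length p" p] False by (simp add: nth_append)
  qed (simp add: nth_append)
qed simp

lemma occurs_at_top_embedding:
  assumes "is_pattern p" and "p \<noteq> []"
  shows "occurs_at p (replicate (length p) 0 @ map (top_embedding p) p) (length p)"
proof -
  have "strict_mono_on (set p) (top_embedding p)"
    using strict_mono_on_top_embedding[OF assms] set_pattern[OF assms] by simp
  then have "reduction (map (top_embedding p) p) = p"
    using reduction_map_strict_mono_on reduction_pattern[OF assms(1)] by simp
  then show ?thesis
    by (simp add: occurs_at_def)
qed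

lemma not_changeable_imp_invalid_change:
  assumes pat: "is_pattern p" and len: "length p = length p'" and max: "Max (set p) = Max (set p')"
    and "\<not> changeable p p'"
  shows "\<exists>n e i. inv_seq n e \<and> occurs_at p e i \<and> \<not> valid_change p p' e i"
proof -
  obtain t where t: "t < length p" and below: "\<forall>j < length p. p ! j < p' ! t + (j - t)"
    using assms(4) by (auto simp: changeable_iff not_le)
  have ne: "p \<noteq> []"
    using t by auto
  have "p' ! t \<le> Max (set p)"
    using t len max by simp
  then have "p' ! t \<in> set p"
    using set_pattern[OF pat ne] by (metis atMost_iff)
  then obtain j where j: "j < length p" "p ! j = p' ! t"
    by (auto simp: in_set_conv_nth)
  define w where "w = map (top_embedding p) p"
  define e where "e = replicate (length p) 0 @ w"
  have inv: "inv_seq (2 * length p) e" and occ: "occurs_at p e (length p)"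
    using inv_seq_top_embedding occurs_at_top_embedding[OF pat ne] by (simp_all add: e_def w_def)
  have window: "take (length p) (drop (length p) e) = w"
    by (simp add: e_def w_def)
  have red: "reduction w = p"
    using occ window by (simp add: occurs_at_def)
  have "sorted_list_of_set (set w) ! (p' ! t) = top_embedding p (p' ! t)"
    using reduction_nth_sorted_list_of_set(2)[of j w] j red by (simp add: w_def)
  also have "\<dots> > length p + t"
    using top_embedding_gt[OF pat ne \<open>p' ! t \<le> Max (set p)\<close> below] .
  finally have "\<not> valid_change p p' e (length p)"
    using valid_change_iff[OF inv occ len] t window by auto
  with inv occ show ?thesis
    by blast
qed

theorem mainTheorem4:
  fixes p p' :: "nat list"
  assumes "is_pattern p" and "is_pattern p'"
    and "length p = length p'"
    and "p ! 0 = p' ! 0"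
    and "p ! (length p - 1) = p' ! (length p' - 1)"
    and "Max (set p) = Max (set p')"
  shows "changeable p p' \<longleftrightarrow>
    (\<forall>n e i. inv_seq n e \<longrightarrow> occurs_at p e i \<longrightarrow> valid_change p p' e i)"
\<comment> \<open>Neither the equal end entries nor \<open>is_pattern p'\<close> are needed.\<close>
proof
  assume "changeable p p'"
  then show "\<forall>n e i. inv_seq n e \<longrightarrow> occurs_at p e i \<longrightarrow> valid_change p p' e i"
    using changeable_imp_valid_change[OF _ assms(3,6)] by blast
next
  assume "\<forall>n e i. inv_seq n e \<longrightarrow> occurs_at p e i \<longrightarrow> valid_change p p' e i"
  then show "changeable p p'"
    using not_changeable_imp_invalid_change[OF assms(1,3,6)] by blast
qed

end
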